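(* Let $\varphi$ be an arithmetic formula (set parameters allowed). Then \[ \mathrm{ACA}_0\vdash{\tt wo}(\Lambda)\to\forall\lambda\in|\Lambda|\,\big(\widehat{\tt TR}^\Lambda_\lambda(\varphi,X)\leftrightarrow{\tt TR}^\Lambda_\lambda(\varphi,X)\big). \]
   Context: Second-order arithmetic with $0,1,+,\times$, exponentiation, $<,=,\in$; $\mathrm{ACA}_0=\mathrm Q+{\tt Ind}+$arithmetic comprehension. A set $\Lambda$ codes $(|\Lambda|,<_\Lambda)$; ${\tt wo}(\Lambda)$ states it is a linear order on $|\Lambda|$ with every nonempty subset having a least element. $\langle\cdot,\cdot\rangle$ is pairing with projections $(x)_0,(x)_1$; $Y_\xi=\{x:\langle\xi,x\rangle\in Y\}$. For a formula $\varphi(x,Y)$ with recursion variable $Y$, $\varphi(x,Y_{<\lambda})$ replaces each atom $t\in Y$ by $(t)_0<_\Lambda\lambda\wedge t\in Y$. ${\tt TR}^\Lambda_\lambda(\varphi,Y)$ is $\forall\xi\le_\Lambda\lambda\,\forall x(x\in Y_\xi\leftrightarrow\varphi(x,Y_{<\xi}))$. $\widehat{\tt TR}^\Lambda_\lambda(\varphi,X)$ is $\forall x\big((x)_0\le_\Lambda\lambda\to[x\in X\leftrightarrow\forall Y({\tt TR}^\Lambda_{(x)_0}(\varphi,Y)\to\varphi((x)_1,Y_{<(x)_0}))]\big)$. *)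

theory Defs
  imports Main
begin

(* Two-sorted language of second-order arithmetic: 0,1,+,*,exp,<,=,\<in>.
   Number variables and set variables are both indexed by nat (separate namespaces). *)
datatype tm = Var nat | Zero | One | Add tm tm | Mul tm tm | Pow tm tm

datatype fm = Eq tm tm | Lt tm tm | Mem tm nat
  | Neg fm | Conj fm fm | Disj fm fm | Imp fm fm
  | All nat fm | Ex nat fm
  | SAll nat fm | SEx nat fm

fun arith :: "fm \<Rightarrow> bool" where
  "arith (Eq t u) = True"
| "arith (Lt t u) = True"
| "arith (Mem t X) = True"
| "arith (Neg p) = arith p"
| "arith (Conj p q) = (arith p \<and> arith q)"
| "arith (Disj p q) = (arith p \<and> arith q)"
| "arith (Imp p q) = (arith p \<and> arith q)"
| "arith (All n p) = arith p"
| "arith (Ex n p) = arith p"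
| "arith (SAll X p) = False"
| "arith (SEx X p) = False"

(* Henkin (general) structures: number domain = the type 'a, set sort = sets *)
record 'a s2 =
  zer :: 'a
  one :: 'a
  add :: "'a \<Rightarrow> 'a \<Rightarrow> 'a"
  mul :: "'a \<Rightarrow> 'a \<Rightarrow> 'a"
  pw  :: "'a \<Rightarrow> 'a \<Rightarrow> 'a"
  ls  :: "'a \<Rightarrow> 'a \<Rightarrow> bool"
  sets :: "'a set set"

fun ev :: "'a s2 \<Rightarrow> (nat \<Rightarrow> 'a) \<Rightarrow> tm \<Rightarrow> 'a" where
  "ev M e (Var n) = e n"
| "ev M e Zero = zer M"
| "ev M e One = one M"
| "ev M e (Add t u) = add M (ev M e t) (ev M e u)"
| "ev M e (Mul t u) = mul M (ev M e t) (ev M e u)"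
| "ev M e (Pow t u) = pw M (ev M e t) (ev M e u)"

fun sat :: "'a s2 \<Rightarrow> (nat \<Rightarrow> 'a) \<Rightarrow> (nat \<Rightarrow> 'a set) \<Rightarrow> fm \<Rightarrow> bool" where
  "sat M e E (Eq t u) = (ev M e t = ev M e u)"
| "sat M e E (Lt t u) = ls M (ev M e t) (ev M e u)"
| "sat M e E (Mem t X) = (ev M e t \<in> E X)"
| "sat M e E (Neg p) = (\<not> sat M e E p)"
| "sat M e E (Conj p q) = (sat M e E p \<and> sat M e E q)"
| "sat M e E (Disj p q) = (sat M e E p \<or> sat M e E q)"
| "sat M e E (Imp p q) = (sat M e E p \<longrightarrow> sat M e E q)"
| "sat M e E (All n p) = (\<forall>a. sat M (e(n := a)) E p)"
| "sat M e E (Ex n p) = (\<exists>a. sat M (e(n := a)) E p)"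
| "sat M e E (SAll X p) = (\<forall>A\<in>sets M. sat M e (E(X := A)) p)"
| "sat M e E (SEx X p) = (\<exists>A\<in>sets M. sat M e (E(X := A)) p)"

definition ACA0_model :: "'a s2 \<Rightarrow> bool" where
  "ACA0_model M \<longleftrightarrow>
     \<comment> \<open>Q (with exponentiation and <)\<close>
     (\<forall>m. add M m (one M) \<noteq> zer M) \<and>
     (\<forall>m n. add M m (one M) = add M n (one M) \<longrightarrow> m = n) \<and>
     (\<forall>m. m \<noteq> zer M \<longrightarrow> (\<exists>n. m = add M n (one M))) \<and>
     (\<forall>m. add M m (zer M) = m) \<and>
     (\<forall>m n. add M m (add M n (one M)) = add M (add M m n) (one M)) \<and>
     (\<forall>m. mul M m (zer M) = zer M) \<and>
     (\<forall>m n. mul M m (add M n (one M)) = add M (mul M m n) m) \<and>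
     (\<forall>m. pw M m (zer M) = one M) \<and>
     (\<forall>m n. pw M m (add M n (one M)) = mul M (pw M m n) m) \<and>
     (\<forall>m. \<not> ls M m (zer M)) \<and>
     (\<forall>m n. ls M m (add M n (one M)) \<longleftrightarrow> (ls M m n \<or> m = n)) \<and>
     \<comment> \<open>Ind (set induction)\<close>
     (\<forall>X\<in>sets M. zer M \<in> X \<and> (\<forall>n. n \<in> X \<longrightarrow> add M n (one M) \<in> X) \<longrightarrow> (\<forall>n. n \<in> X)) \<and>
     \<comment> \<open>arithmetic comprehension (arbitrary number and set parameters)\<close>
     (\<forall>\<psi> v e E. arith \<psi> \<longrightarrow> (\<forall>Z. E Z \<in> sets M) \<longrightarrow>
         {a. sat M (e(v := a)) E \<psi>} \<in> sets M)"

(* Cantor pairing, defined in the language: 2p = (a+b)(a+b+1) + 2a *)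
definition ispair :: "'a s2 \<Rightarrow> 'a \<Rightarrow> 'a \<Rightarrow> 'a \<Rightarrow> bool" where
  "ispair M p a b \<longleftrightarrow>
     add M p p = add M (mul M (add M a b) (add M (add M a b) (one M))) (add M a a)"

definition pair :: "'a s2 \<Rightarrow> 'a \<Rightarrow> 'a \<Rightarrow> 'a" where
  "pair M a b = (THE p. ispair M p a b)"

definition proj0 :: "'a s2 \<Rightarrow> 'a \<Rightarrow> 'a" where
  "proj0 M p = (THE a. \<exists>b. ispair M p a b)"

definition proj1 :: "'a s2 \<Rightarrow> 'a \<Rightarrow> 'a" where
  "proj1 M p = (THE b. \<exists>a. ispair M p a b)"

definition leL :: "'a s2 \<Rightarrow> 'a set \<Rightarrow> 'a \<Rightarrow> 'a \<Rightarrow> bool" where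
  "leL M L x y \<longleftrightarrow> pair M x y \<in> L"

definition ltL :: "'a s2 \<Rightarrow> 'a set \<Rightarrow> 'a \<Rightarrow> 'a \<Rightarrow> bool" where
  "ltL M L x y \<longleftrightarrow> leL M L x y \<and> x \<noteq> y"

definition fieldL :: "'a s2 \<Rightarrow> 'a set \<Rightarrow> 'a \<Rightarrow> bool" where
  "fieldL M L x \<longleftrightarrow> (\<exists>y. leL M L x y \<or> leL M L y x)"

definition wo :: "'a s2 \<Rightarrow> 'a set \<Rightarrow> bool" where
  "wo M L \<longleftrightarrow>
     (\<forall>x. fieldL M L x \<longrightarrow> leL M L x x) \<and>
     (\<forall>x y. leL M L x y \<and> leL M L y x \<longrightarrow> x = y) \<and>
     (\<forall>x y z. leL M L x y \<and> leL M L y z \<longrightarrow> leL M L x z) \<and>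
     (\<forall>x y. fieldL M L x \<and> fieldL M L y \<longrightarrow> leL M L x y \<or> leL M L y x) \<and>
     (\<forall>Z\<in>sets M. (\<exists>x\<in>Z. fieldL M L x) \<longrightarrow>
         (\<exists>x\<in>Z. fieldL M L x \<and> (\<forall>y\<in>Z. fieldL M L y \<longrightarrow> leL M L x y)))"

(* Y_{<\<xi>}: replacing atoms t \<in> Y by (t)_0 <_\<Lambda> \<xi> \<and> t \<in> Y *)
definition below :: "'a s2 \<Rightarrow> 'a set \<Rightarrow> 'a \<Rightarrow> 'a set \<Rightarrow> 'a set" where
  "below M L \<xi> Y = {t \<in> Y. ltL M L (proj0 M t) \<xi>}"

(* TR^\<Lambda>_\<lambda>(\<phi>,Y), where \<phi> = \<phi>(x,Y) with x the number variable xv and Y the set variable yv;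
   remaining free variables of \<phi> are parameters interpreted by e, E *)
definition TR :: "'a s2 \<Rightarrow> fm \<Rightarrow> nat \<Rightarrow> nat \<Rightarrow> (nat \<Rightarrow> 'a) \<Rightarrow> (nat \<Rightarrow> 'a set)
                  \<Rightarrow> 'a set \<Rightarrow> 'a \<Rightarrow> 'a set \<Rightarrow> bool" where
  "TR M \<phi> xv yv e E L lam Y \<longleftrightarrow>
     (\<forall>\<xi>. leL M L \<xi> lam \<longrightarrow>
        (\<forall>x. pair M \<xi> x \<in> Y \<longleftrightarrow> sat M (e(xv := x)) (E(yv := below M L \<xi> Y)) \<phi>))"

definition TRhat :: "'a s2 \<Rightarrow> fm \<Rightarrow> nat \<Rightarrow> nat \<Rightarrow> (nat \<Rightarrow> 'a) \<Rightarrow> (nat \<Rightarrow> 'a set)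
                  \<Rightarrow> 'a set \<Rightarrow> 'a \<Rightarrow> 'a set \<Rightarrow> bool" where
  "TRhat M \<phi> xv yv e E L lam X \<longleftrightarrow>
     (\<forall>x. leL M L (proj0 M x) lam \<longrightarrow>
        (x \<in> X \<longleftrightarrow>
          (\<forall>Y\<in>sets M. TR M \<phi> xv yv e E L (proj0 M x) Y \<longrightarrow>
              sat M (e(xv := proj1 M x)) (E(yv := below M L (proj0 M x) Y)) \<phi>)))"

end

theory Submission
  imports Defs
begin

(* Two hierarchies agree as far as both reach: the least point of
   disagreement exists because the set of disagreement points is arithmetic in the two
   hierarchies, and below it both obey the same recursion.  Hence for a hierarchy X the
   quantifier over Y in TRhat collapses to Y = X, which gives TR => TRhat.  Conversely, if X
   satisfies TRhat but not TR, let xi0 be the least stage at which X violates the recursion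
   (again an arithmetic set).  Adding the correct xi0-th stage to X_<xi0 yields a hierarchy Y up
   to xi0, and TRhat at xi0 forces X to agree with Y there, a contradiction.

   In an arbitrary Henkin model one first has to derive from Q and set induction that the
   Cantor pairing used by the coding is a bijection.  To apply comprehension to phi(x, X_<xi)
   with xi varying, all restrictions X_<xi are coded into a single set of the model. *)

text \<open>Strict upper bounds on the indices of all number and set variables, bound ones included;
  they are used to choose fresh variables.\<close>
fun num_bound_tm :: "tm \<Rightarrow> nat" where
  "num_bound_tm (Var n) = Suc n"
| "num_bound_tm Zero = 0"
| "num_bound_tm One = 0"
| "num_bound_tm (Add t u) = max (num_bound_tm t) (num_bound_tm u)"
| "num_bound_tm (Mul t u) = max (num_bound_tm t) (num_bound_tm u)"
| "num_bound_tm (Pow t u) = max (num_bound_tm t) (num_bound_tm u)"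

fun num_bound :: "fm \<Rightarrow> nat" where
  "num_bound (Eq t u) = max (num_bound_tm t) (num_bound_tm u)"
| "num_bound (Lt t u) = max (num_bound_tm t) (num_bound_tm u)"
| "num_bound (Mem t X) = num_bound_tm t"
| "num_bound (Neg p) = num_bound p"
| "num_bound (Conj p q) = max (num_bound p) (num_bound q)"
| "num_bound (Disj p q) = max (num_bound p) (num_bound q)"
| "num_bound (Imp p q) = max (num_bound p) (num_bound q)"
| "num_bound (All n p) = max (Suc n) (num_bound p)"
| "num_bound (Ex n p) = max (Suc n) (num_bound p)"
| "num_bound (SAll X p) = num_bound p"
| "num_bound (SEx X p) = num_bound p"

fun set_bound :: "fm \<Rightarrow> nat" where
  "set_bound (Eq t u) = 0"
| "set_bound (Lt t u) = 0"
| "set_bound (Mem t X) = Suc X"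
| "set_bound (Neg p) = set_bound p"
| "set_bound (Conj p q) = max (set_bound p) (set_bound q)"
| "set_bound (Disj p q) = max (set_bound p) (set_bound q)"
| "set_bound (Imp p q) = max (set_bound p) (set_bound q)"
| "set_bound (All n p) = set_bound p"
| "set_bound (Ex n p) = set_bound p"
| "set_bound (SAll X p) = max (Suc X) (set_bound p)"
| "set_bound (SEx X p) = max (Suc X) (set_bound p)"

lemma ev_cong: "(\<And>n. n < num_bound_tm t \<Longrightarrow> e n = e' n) \<Longrightarrow> ev M e t = ev M e' t"
  by (induction t) auto

lemma sat_cong:
  assumes "\<And>n. n < num_bound p \<Longrightarrow> e n = e' n" and "\<And>Z. Z < set_bound p \<Longrightarrow> E Z = E' Z"
  shows "sat M e E p \<longleftrightarrow> sat M e' E' p"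
  using assms
proof (induction p arbitrary: e e' E E')
  case (Eq t u)
  then show ?case using ev_cong[of t e e' M] ev_cong[of u e e' M] by auto
next
  case (Lt t u)
  then show ?case using ev_cong[of t e e' M] ev_cong[of u e e' M] by auto
next
  case (Mem t X)
  then show ?case using ev_cong[of t e e' M] by auto
next
  case (All n p)
  have "sat M (e(n := a)) E p \<longleftrightarrow> sat M (e'(n := a)) E' p" for a
    by (rule All.IH; use All.prems in auto)
  then show ?case by simp
next
  case (Ex n p)
  have "sat M (e(n := a)) E p \<longleftrightarrow> sat M (e'(n := a)) E' p" for a
    by (rule Ex.IH; use Ex.prems in auto)
  then show ?case by simp
next
  case (SAll X p)
  have "sat M e (E(X := A)) p \<longleftrightarrow> sat M e' (E'(X := A)) p" for A
    by (rule SAll.IH; use SAll.prems in auto)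
  then show ?case by simp
next
  case (SEx X p)
  have "sat M e (E(X := A)) p \<longleftrightarrow> sat M e' (E'(X := A)) p" for A
    by (rule SEx.IH; use SEx.prems in auto)
  then show ?case by simp
next
  case (Conj p q)
  have "sat M e E p \<longleftrightarrow> sat M e' E' p" "sat M e E q \<longleftrightarrow> sat M e' E' q"
    by (rule Conj.IH; use Conj.prems in auto)+
  then show ?case by simp
next
  case (Disj p q)
  have "sat M e E p \<longleftrightarrow> sat M e' E' p" "sat M e E q \<longleftrightarrow> sat M e' E' q"
    by (rule Disj.IH; use Disj.prems in auto)+
  then show ?case by simp
next
  case (Imp p q)
  have "sat M e E p \<longleftrightarrow> sat M e' E' p" "sat M e E q \<longleftrightarrow> sat M e' E' q"
    by (rule Imp.IH; use Imp.prems in auto)+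
  then show ?case by simp
next
  case (Neg p)
  have "sat M e E p \<longleftrightarrow> sat M e' E' p" by (rule Neg.IH; use Neg.prems in auto)
  then show ?case by simp
qed

definition pcode_tm :: "tm \<Rightarrow> tm \<Rightarrow> tm" where
  "pcode_tm u w = Add (Mul (Add u w) (Add (Add u w) One)) (Add u u)"

definition is_pair_fm :: "tm \<Rightarrow> tm \<Rightarrow> tm \<Rightarrow> fm" where
  "is_pair_fm p u w = Eq (Add p p) (pcode_tm u w)"

definition pair_mem_fm :: "tm \<Rightarrow> tm \<Rightarrow> nat \<Rightarrow> nat \<Rightarrow> fm" where
  "pair_mem_fm u w k S = Ex k (Conj (is_pair_fm (Var k) u w) (Mem (Var k) S))"

definition iff_fm :: "fm \<Rightarrow> fm \<Rightarrow> fm" where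
  "iff_fm p q = Conj (Imp p q) (Imp q p)"

lemma arith_is_pair_fm [simp]: "arith (is_pair_fm p u w)"
  by (simp add: is_pair_fm_def)

lemma arith_pair_mem_fm [simp]: "arith (pair_mem_fm u w k S)"
  by (simp add: pair_mem_fm_def)

lemma arith_iff_fm [simp]: "arith (iff_fm p q) \<longleftrightarrow> arith p \<and> arith q"
  by (auto simp: iff_fm_def)

lemma sat_iff_fm [simp]: "sat M e E (iff_fm p q) \<longleftrightarrow> (sat M e E p \<longleftrightarrow> sat M e E q)"
  by (auto simp: iff_fm_def)

text \<open>With \<open>Y\<close> read as the code set of
  all restrictions \<open>X\<^bsub><\<xi>\<^esub>\<close> this expresses \<open>\<phi>(x, X\<^bsub><\<xi>\<^esub>)\<close> by one arithmetic formula in \<open>\<xi>\<close>.\<close>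
fun below_subst :: "nat \<Rightarrow> nat \<Rightarrow> fm \<Rightarrow> fm" where
  "below_subst yv xi (Mem t Y) = (if Y = yv then Mem (pcode_tm t (Var xi)) Y else Mem t Y)"
| "below_subst yv xi (Neg p) = Neg (below_subst yv xi p)"
| "below_subst yv xi (Conj p q) = Conj (below_subst yv xi p) (below_subst yv xi q)"
| "below_subst yv xi (Disj p q) = Disj (below_subst yv xi p) (below_subst yv xi q)"
| "below_subst yv xi (Imp p q) = Imp (below_subst yv xi p) (below_subst yv xi q)"
| "below_subst yv xi (All n p) = All n (below_subst yv xi p)"
| "below_subst yv xi (Ex n p) = Ex n (below_subst yv xi p)"
| "below_subst yv xi (SAll X p) = SAll X (below_subst yv xi p)"
| "below_subst yv xi (SEx X p) = SEx X (below_subst yv xi p)"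
| "below_subst yv xi p = p"

lemma arith_below_subst [simp]: "arith (below_subst yv xi p) \<longleftrightarrow> arith p"
  by (induction p) auto

section \<open>Arithmetic in models of \<open>ACA\<^sub>0\<close>\<close>

locale aca_model =
  fixes M :: "'a s2"
  assumes ACA0: "ACA0_model M" and sets_nonempty: "sets M \<noteq> {}"
begin

abbreviation zero_M ("\<zero>") where "\<zero> \<equiv> zer M"
abbreviation one_M ("\<one>") where "\<one> \<equiv> one M"
abbreviation add_M (infixl "\<oplus>" 65) where "x \<oplus> y \<equiv> add M x y"
abbreviation mul_M (infixl "\<otimes>" 70) where "x \<otimes> y \<equiv> mul M x y"

lemma succ_neq_zero: "m \<oplus> \<one> \<noteq> \<zero>"
  using ACA0 unfolding ACA0_model_def by (elim conjE) blast

lemma succ_inject: "m \<oplus> \<one> = n \<oplus> \<one> \<Longrightarrow> m = n"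
  using ACA0 unfolding ACA0_model_def by (elim conjE) blast

lemma zero_or_succ: "m \<noteq> \<zero> \<Longrightarrow> \<exists>n. m = n \<oplus> \<one>"
  using ACA0 unfolding ACA0_model_def by (elim conjE) blast

lemma r_zero: "m \<oplus> \<zero> = m"
  using ACA0 unfolding ACA0_model_def by (elim conjE) blast

lemma add_succ: "m \<oplus> (n \<oplus> \<one>) = (m \<oplus> n) \<oplus> \<one>"
  using ACA0 unfolding ACA0_model_def by (elim conjE) blast

lemma r_null: "m \<otimes> \<zero> = \<zero>"
  using ACA0 unfolding ACA0_model_def by (elim conjE) blast

lemma mul_succ: "m \<otimes> (n \<oplus> \<one>) = m \<otimes> n \<oplus> m"
  using ACA0 unfolding ACA0_model_def by (elim conjE) blast

lemma set_induct: "X \<in> sets M \<Longrightarrow> \<zero> \<in> X \<Longrightarrow> (\<And>n. n \<in> X \<Longrightarrow> n \<oplus> \<one> \<in> X) \<Longrightarrow> n \<in> X"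
  using ACA0 unfolding ACA0_model_def by (elim conjE) blast

lemma definable_in_sets:
  assumes "arith \<psi>" and "\<And>Z. E Z \<in> sets M" and "\<And>a. a \<in> A \<longleftrightarrow> sat M (e(v := a)) E \<psi>"
  shows "A \<in> sets M"
proof -
  have "\<forall>\<psi> v e E. arith \<psi> \<longrightarrow> (\<forall>Z. E Z \<in> sets M) \<longrightarrow> {a. sat M (e(v := a)) E \<psi>} \<in> sets M"
    using ACA0 unfolding ACA0_model_def by (elim conjE) assumption
  then have "{a. sat M (e(v := a)) E \<psi>} \<in> sets M" using assms(1,2) by blast
  moreover have "A = {a. sat M (e(v := a)) E \<psi>}" using assms(3) by blast
  ultimately show ?thesis by simp
qed

text \<open>Quantifying over \<open>E\<close> in the second premise says that \<open>\<psi>\<close> has no set parameters, so the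
  instance of comprehension may use any set of the model for them.\<close>
lemma arith_induct:
  assumes "arith \<psi>" and "\<And>E n. P n \<longleftrightarrow> sat M (e(v := n)) E \<psi>"
    and "P \<zero>" and "\<And>n. P n \<Longrightarrow> P (n \<oplus> \<one>)"
  shows "P n"
proof -
  obtain S where S: "S \<in> sets M" using sets_nonempty by blast
  have "{a. P a} \<in> sets M"
    by (rule definable_in_sets[where E = "\<lambda>_. S"]) (use assms(1,2) S in auto)
  then have "n \<in> {a. P a}" by (rule set_induct) (use assms(3,4) in auto)
  then show ?thesis by simp
qed

lemma l_zero: "\<zero> \<oplus> n = n"
  by (induct n rule: arith_induct[where \<psi> = "Eq (Add Zero (Var 0)) (Var 0)" and v = 0])
    (auto simp: r_zero add_succ)

lemma add_succ_left: "(m \<oplus> \<one>) \<oplus> n = (m \<oplus> n) \<oplus> \<one>"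
  by (induct n rule: arith_induct[where
        \<psi> = "Eq (Add (Add (Var 1) One) (Var 0)) (Add (Add (Var 1) (Var 0)) One)" and v = 0
        and e = "\<lambda>_. m"])
    (auto simp: r_zero add_succ)

lemma a_comm: "m \<oplus> n = n \<oplus> m"
  by (induct n rule: arith_induct[where
        \<psi> = "Eq (Add (Var 1) (Var 0)) (Add (Var 0) (Var 1))" and v = 0 and e = "\<lambda>_. m"])
    (simp_all add: r_zero l_zero add_succ add_succ_left)

lemma a_assoc: "(a \<oplus> b) \<oplus> c = a \<oplus> (b \<oplus> c)"
  by (induct c rule: arith_induct[where
        \<psi> = "Eq (Add (Add (Var 1) (Var 2)) (Var 0)) (Add (Var 1) (Add (Var 2) (Var 0)))" and v = 0
        and e = "(\<lambda>_. b)(1 := a)"])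
    (simp_all add: r_zero add_succ)

lemma a_lcomm: "a \<oplus> (b \<oplus> c) = b \<oplus> (a \<oplus> c)"
  by (metis a_assoc a_comm)

lemmas a_ac = a_assoc a_comm a_lcomm

lemma a_rcancel: "a \<oplus> c = b \<oplus> c \<Longrightarrow> a = b"
  by (induct c rule: arith_induct[where
        \<psi> = "Imp (Eq (Add (Var 1) (Var 0)) (Add (Var 2) (Var 0))) (Eq (Var 1) (Var 2))" and v = 0
        and e = "(\<lambda>_. b)(1 := a)", rule_format])
    (auto simp: r_zero add_succ dest: succ_inject)

lemma a_lcancel: "c \<oplus> a = c \<oplus> b \<Longrightarrow> a = b"
  using a_rcancel a_comm by metis

lemma r_one: "n \<otimes> \<one> = n"
  using mul_succ[of n \<zero>] by (simp add: l_zero r_null)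

lemma l_null: "\<zero> \<otimes> n = \<zero>"
  by (induct n rule: arith_induct[where \<psi> = "Eq (Mul Zero (Var 0)) Zero" and v = 0])
    (simp_all add: r_zero r_null mul_succ)

lemma mul_succ_left: "(m \<oplus> \<one>) \<otimes> n = m \<otimes> n \<oplus> n"
  by (induct n rule: arith_induct[where
        \<psi> = "Eq (Mul (Add (Var 1) One) (Var 0)) (Add (Mul (Var 1) (Var 0)) (Var 0))" and v = 0
        and e = "\<lambda>_. m"])
    (simp_all add: r_zero r_null mul_succ a_ac)

lemma m_comm: "m \<otimes> n = n \<otimes> m"
  by (induct n rule: arith_induct[where
        \<psi> = "Eq (Mul (Var 1) (Var 0)) (Mul (Var 0) (Var 1))" and v = 0 and e = "\<lambda>_. m"])
    (simp_all add: r_null l_null mul_succ mul_succ_left)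

lemma r_distr: "a \<otimes> (b \<oplus> c) = a \<otimes> b \<oplus> a \<otimes> c"
proof (induct c rule: arith_induct[where
      \<psi> = "Eq (Mul (Var 1) (Add (Var 2) (Var 0))) (Add (Mul (Var 1) (Var 2)) (Mul (Var 1) (Var 0)))"
      and v = 0 and e = "(\<lambda>_. b)(1 := a)"])
  case (4 c)
  then show ?case by (simp only: add_succ mul_succ) (simp add: a_ac)
qed (simp_all add: r_zero r_null)

lemma l_distr: "(b \<oplus> c) \<otimes> a = b \<otimes> a \<oplus> c \<otimes> a"
  using r_distr m_comm by metis

lemma m_assoc: "(a \<otimes> b) \<otimes> c = a \<otimes> (b \<otimes> c)"
  by (induct c rule: arith_induct[where
        \<psi> = "Eq (Mul (Mul (Var 1) (Var 2)) (Var 0)) (Mul (Var 1) (Mul (Var 2) (Var 0)))" and v = 0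
        and e = "(\<lambda>_. b)(1 := a)"])
    (simp_all add: r_null r_one mul_succ r_distr)

lemma m_lcomm: "a \<otimes> (b \<otimes> c) = b \<otimes> (a \<otimes> c)"
  by (metis m_assoc m_comm)

lemma l_one: "\<one> \<otimes> n = n"
  using r_one m_comm by metis

lemmas semiring_simps =
  a_ac m_assoc m_comm m_lcomm l_distr r_distr l_zero r_zero l_null r_null l_one r_one

lemma add_eq_zero_right: "u \<oplus> v = \<zero> \<Longrightarrow> v = \<zero>"
  using zero_or_succ add_succ succ_neq_zero by metis

lemma add_linear: "(\<exists>d. n = m \<oplus> d) \<or> (\<exists>d. m = n \<oplus> d)"
proof (induct n rule: arith_induct[where
      \<psi> = "Disj (Ex 3 (Eq (Var 0) (Add (Var 1) (Var 3)))) (Ex 3 (Eq (Var 1) (Add (Var 0) (Var 3))))"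
      and v = 0 and e = "\<lambda>_. m"])
  case (4 n)
  then show ?case
  proof
    assume "\<exists>d. n = m \<oplus> d"
    then show ?thesis by (metis add_succ)
  next
    assume "\<exists>d. m = n \<oplus> d"
    then obtain d where d: "m = n \<oplus> d" ..
    show ?thesis
    proof (cases "d = \<zero>")
      case True
      then show ?thesis using d by (metis r_zero)
    next
      case False
      then obtain d' where "d = d' \<oplus> \<one>" using zero_or_succ by blast
      then have "m = n \<oplus> \<one> \<oplus> d'" using d by (simp add: a_ac)
      then show ?thesis by blast
    qed
  qed
qed (auto simp: l_zero)

lemma even_or_odd: "\<exists>k. n = k \<oplus> k \<or> n = k \<oplus> k \<oplus> \<one>"
proof (induct n rule: arith_induct[where
      \<psi> = "Ex 1 (Disj (Eq (Var 0) (Add (Var 1) (Var 1))) (Eq (Var 0) (Add (Add (Var 1) (Var 1)) One)))"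
      and v = 0])
  case 3
  show ?case by (metis r_zero)
next
  case (4 n)
  then obtain k where "n = k \<oplus> k \<or> n = k \<oplus> k \<oplus> \<one>" ..
  then show ?case
  proof
    assume "n = k \<oplus> k \<oplus> \<one>"
    then have "n \<oplus> \<one> = (k \<oplus> \<one>) \<oplus> (k \<oplus> \<one>)" by (simp add: a_ac)
    then show ?thesis by blast
  qed blast
qed auto

lemma double_inject: "k \<oplus> k = j \<oplus> j \<Longrightarrow> k = j"
proof -
  have eq_if_le: "j = k" if "k \<oplus> k = j \<oplus> j" and j: "j = k \<oplus> d" for j k d
  proof -
    have "(d \<oplus> d) \<oplus> (k \<oplus> k) = j \<oplus> j" unfolding j by (simp add: a_ac)
    also have "\<dots> = \<zero> \<oplus> (k \<oplus> k)" using that(1) by (simp add: l_zero)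
    finally have "d \<oplus> d = \<zero>" by (rule a_rcancel)
    then have "d = \<zero>" by (rule add_eq_zero_right)
    then show ?thesis using j by (simp add: r_zero)
  qed
  show "k \<oplus> k = j \<oplus> j \<Longrightarrow> k = j" using add_linear[of j k] eq_if_le by metis
qed

lemma even_mul_succ: "\<exists>k. n \<otimes> (n \<oplus> \<one>) = k \<oplus> k"
proof -
  obtain k where "n = k \<oplus> k \<or> n = k \<oplus> k \<oplus> \<one>" using even_or_odd by blast
  then show ?thesis
  proof
    assume "n = k \<oplus> k"
    then have "n \<otimes> (n \<oplus> \<one>) = k \<otimes> (n \<oplus> \<one>) \<oplus> k \<otimes> (n \<oplus> \<one>)" by (simp add: l_distr)
    then show ?thesis by blast
  next
    assume "n = k \<oplus> k \<oplus> \<one>"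
    then have "n \<oplus> \<one> = (k \<oplus> \<one>) \<oplus> (k \<oplus> \<one>)" by (simp add: a_ac)
    then have "n \<otimes> (n \<oplus> \<one>) = n \<otimes> (k \<oplus> \<one>) \<oplus> n \<otimes> (k \<oplus> \<one>)" by (simp add: r_distr)
    then show ?thesis by blast
  qed
qed

subsection \<open>Cantor pairing\<close>

text \<open>Twice the Cantor code of \<open>(a, b)\<close>, as in the definition of \<open>ispair\<close>.\<close>
definition pcode :: "'a \<Rightarrow> 'a \<Rightarrow> 'a" where
  "pcode a b = (a \<oplus> b) \<otimes> ((a \<oplus> b) \<oplus> \<one>) \<oplus> (a \<oplus> a)"

lemma ispair_iff_pcode: "ispair M p a b \<longleftrightarrow> p \<oplus> p = pcode a b"
  unfolding ispair_def pcode_def ..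

lemma pcode_even: "\<exists>p. p \<oplus> p = pcode a b"
proof -
  obtain k where k: "(a \<oplus> b) \<otimes> ((a \<oplus> b) \<oplus> \<one>) = k \<oplus> k" using even_mul_succ by blast
  have "(k \<oplus> a) \<oplus> (k \<oplus> a) = pcode a b" unfolding pcode_def k by (simp add: a_ac)
  then show ?thesis by blast
qed

lemma pcode_sum_succ:
  assumes "a' \<oplus> b' = (a \<oplus> b) \<oplus> (d \<oplus> \<one>)"
  shows "\<exists>r. pcode a' b' = pcode a b \<oplus> (r \<oplus> \<one>)"
proof
  \<comment> \<open>with \<open>s = a \<oplus> b\<close>, \<open>?r\<close> is \<open>(s + d + 1)(s + d + 2) + 2a' - s(s + 1) - 2a - 1\<close> expanded\<close>
  let ?r = "a \<otimes> d \<oplus> a \<otimes> d \<oplus> b \<otimes> d \<oplus> b \<otimes> d \<oplus> b \<oplus> b \<oplus> (d \<oplus> \<one>) \<otimes> (d \<oplus> \<one>) \<oplus> d \<oplus> a' \<oplus> a'"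
  show "pcode a' b' = pcode a b \<oplus> (?r \<oplus> \<one>)"
    unfolding pcode_def assms by (simp add: semiring_simps)
qed

lemma pcode_eq_sum_excess:
  assumes "pcode a b = pcode a' b'" and "a' \<oplus> b' = (a \<oplus> b) \<oplus> d"
  shows "d = \<zero>"
proof (rule ccontr)
  assume "d \<noteq> \<zero>"
  then obtain d' where "d = d' \<oplus> \<one>" using zero_or_succ by blast
  then obtain r where "pcode a' b' = pcode a b \<oplus> (r \<oplus> \<one>)"
    using pcode_sum_succ assms(2) by blast
  then have "pcode a b \<oplus> (r \<oplus> \<one>) = pcode a b \<oplus> \<zero>" using assms(1) by (simp add: r_zero)
  then have "r \<oplus> \<one> = \<zero>" by (rule a_lcancel)
  then show False using succ_neq_zero by blast
qed

lemma pcode_inject: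
  assumes "pcode a b = pcode a' b'"
  shows "a = a' \<and> b = b'"
proof -
  have sum: "a' \<oplus> b' = a \<oplus> b"
    using add_linear[of "a' \<oplus> b'" "a \<oplus> b"]
      pcode_eq_sum_excess[OF assms] pcode_eq_sum_excess[OF assms[symmetric]]
    by (metis r_zero)
  have "(a \<oplus> b) \<otimes> ((a \<oplus> b) \<oplus> \<one>) \<oplus> (a \<oplus> a) = (a \<oplus> b) \<otimes> ((a \<oplus> b) \<oplus> \<one>) \<oplus> (a' \<oplus> a')"
    using assms unfolding pcode_def sum .
  then have "a = a'" using a_lcancel double_inject by blast
  then show ?thesis using sum a_lcancel by blast
qed

lemma pcode_next_diagonal: "pcode a \<zero> \<oplus> (\<one> \<oplus> \<one>) = pcode \<zero> (a \<oplus> \<one>)"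
  unfolding pcode_def by (simp add: semiring_simps)

lemma pcode_next_on_diagonal: "pcode a (b \<oplus> \<one>) \<oplus> (\<one> \<oplus> \<one>) = pcode (a \<oplus> \<one>) b"
  unfolding pcode_def by (simp add: semiring_simps)

lemma pcode_surj: "\<exists>a b. p \<oplus> p = pcode a b"
proof (induct p rule: arith_induct[where
      \<psi> = "Ex 1 (Ex 2 (Eq (Add (Var 0) (Var 0))
              (Add (Mul (Add (Var 1) (Var 2)) (Add (Add (Var 1) (Var 2)) One)) (Add (Var 1) (Var 1)))))"
      and v = 0 and e = "\<lambda>_. \<zero>"])
  case 3
  have "\<zero> \<oplus> \<zero> = pcode \<zero> \<zero>" by (simp add: pcode_def semiring_simps)
  then show ?case by blast
next
  case (4 p)
  then obtain a b where ab: "p \<oplus> p = pcode a b" by blast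
  have succ: "(p \<oplus> \<one>) \<oplus> (p \<oplus> \<one>) = pcode a b \<oplus> (\<one> \<oplus> \<one>)"
    unfolding ab[symmetric] by (simp add: a_ac)
  show ?case
  proof (cases "b = \<zero>")
    case True
    have "(p \<oplus> \<one>) \<oplus> (p \<oplus> \<one>) = pcode \<zero> (a \<oplus> \<one>)"
      using succ pcode_next_diagonal unfolding True by (rule trans)
    then show ?thesis by (intro exI)
  next
    case False
    then obtain b' where b: "b = b' \<oplus> \<one>" using zero_or_succ by blast
    have "(p \<oplus> \<one>) \<oplus> (p \<oplus> \<one>) = pcode (a \<oplus> \<one>) b'"
      using succ pcode_next_on_diagonal unfolding b by (rule trans)
    then show ?thesis by (intro exI)
  qed
qed (simp_all add: pcode_def)

lemma ex1_ispair: "\<exists>!p. ispair M p a b"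
proof -
  obtain p where "p \<oplus> p = pcode a b" using pcode_even by blast
  then show ?thesis unfolding ispair_iff_pcode by (metis double_inject)
qed

lemma ispair_iff_eq_pair: "ispair M p a b \<longleftrightarrow> p = pair M a b"
  using ex1_ispair[of a b] theI'[OF ex1_ispair[of a b]] unfolding pair_def by blast

lemma pair_pcode: "pair M a b \<oplus> pair M a b = pcode a b"
  using ispair_iff_eq_pair ispair_iff_pcode by blast

lemma pair_inject: "pair M a b = pair M a' b' \<longleftrightarrow> a = a' \<and> b = b'"
  using pcode_inject pair_pcode by metis

lemma pair_surj: "\<exists>a b. t = pair M a b"
  using pcode_surj ispair_iff_eq_pair ispair_iff_pcode by metis

lemma proj0_pair [simp]: "proj0 M (pair M a b) = a"
  unfolding proj0_def by (rule the_equality) (auto simp: ispair_iff_eq_pair pair_inject)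

lemma proj1_pair [simp]: "proj1 M (pair M a b) = b"
  unfolding proj1_def by (rule the_equality) (auto simp: ispair_iff_eq_pair pair_inject)

lemma pair_proj [simp]: "pair M (proj0 M t) (proj1 M t) = t"
  using pair_surj[of t] by auto

lemma ex_pair_iff: "(\<exists>a b. t = pair M a b \<and> P a b) \<longleftrightarrow> P (proj0 M t) (proj1 M t)"
  by (metis pair_proj proj0_pair proj1_pair)

end

context aca_model
begin

lemma ev_pcode_tm [simp]: "ev M e (pcode_tm u w) = pcode (ev M e u) (ev M e w)"
  by (simp add: pcode_tm_def pcode_def)

lemma sat_is_pair_fm [simp]:
  "sat M e E (is_pair_fm p u w) \<longleftrightarrow> ev M e p = pair M (ev M e u) (ev M e w)"
  by (simp add: is_pair_fm_def ispair_iff_eq_pair[symmetric] ispair_iff_pcode)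

lemma sat_pair_mem_fm [simp]:
  "i \<noteq> k \<Longrightarrow> j \<noteq> k \<Longrightarrow> sat M e E (pair_mem_fm (Var i) (Var j) k S) \<longleftrightarrow> pair M (e i) (e j) \<in> E S"
  by (auto simp: pair_mem_fm_def)

definition below_code :: "'a set \<Rightarrow> 'a set \<Rightarrow> 'a set" where
  "below_code L X = {pcode t \<xi> | t \<xi>. t \<in> below M L \<xi> X}"

lemma pcode_in_below_code: "pcode t \<xi> \<in> below_code L X \<longleftrightarrow> t \<in> below M L \<xi> X"
  unfolding below_code_def using pcode_inject by blast

lemma sat_below_subst:
  assumes "arith p" and "num_bound p \<le> xi"
  shows "sat M e (F(yv := below_code L X)) (below_subst yv xi p)
     \<longleftrightarrow> sat M e (F(yv := below M L (e xi) X)) p"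
  using assms
proof (induction p arbitrary: e F)
  case (All n p)
  then have "n \<noteq> xi" by simp
  have "sat M (e(n := a)) (F(yv := below_code L X)) (below_subst yv xi p)
      \<longleftrightarrow> sat M (e(n := a)) (F(yv := below M L ((e(n := a)) xi) X)) p" for a
    using All.prems by (intro All.IH) auto
  then show ?case using \<open>n \<noteq> xi\<close> by (simp only: sat.simps below_subst.simps fun_upd_other)
next
  case (Ex n p)
  then have "n \<noteq> xi" by simp
  have "sat M (e(n := a)) (F(yv := below_code L X)) (below_subst yv xi p)
      \<longleftrightarrow> sat M (e(n := a)) (F(yv := below M L ((e(n := a)) xi) X)) p" for a
    using Ex.prems by (intro Ex.IH) auto
  then show ?case using \<open>n \<noteq> xi\<close> by (simp only: sat.simps below_subst.simps fun_upd_other)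
qed (auto simp: pcode_in_below_code)

lemma below_iff: "t \<in> below M L \<xi> X \<longleftrightarrow> t \<in> X \<and> ltL M L (proj0 M t) \<xi>"
  by (simp add: below_def)

lemma ltL_proj0_iff:
  "ltL M L (proj0 M t) \<xi> \<longleftrightarrow> (\<exists>a b. t = pair M a b \<and> pair M a \<xi> \<in> L \<and> a \<noteq> \<xi>)"
  by (metis ltL_def leL_def pair_proj proj0_pair)

lemma below_code_in_sets:
  assumes "X \<in> sets M" and "L \<in> sets M"
  shows "below_code L X \<in> sets M"
proof (rule definable_in_sets[where v = 0 and e = "\<lambda>_. \<zero>" and E = "\<lambda>Z. if Z = 1 then L else X"])
  show "q \<in> below_code L X \<longleftrightarrow> sat M ((\<lambda>_. \<zero>)(0 := q)) (\<lambda>Z. if Z = 1 then L else X)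
      (Ex 1 (Ex 2 (Conj (Eq (Var 0) (pcode_tm (Var 1) (Var 2))) (Conj (Mem (Var 1) 0)
        (Ex 3 (Ex 4 (Conj (is_pair_fm (Var 1) (Var 3) (Var 4))
          (Conj (pair_mem_fm (Var 3) (Var 2) 5 1) (Neg (Eq (Var 3) (Var 2)))))))))))" for q
    unfolding below_code_def by (auto simp: below_iff ltL_proj0_iff)
qed (use assms in auto)

lemma below_in_sets:
  assumes "X \<in> sets M" and "L \<in> sets M"
  shows "below M L \<xi> X \<in> sets M"
proof (rule definable_in_sets[where v = 0 and e = "\<lambda>_. \<xi>" and E = "\<lambda>Z. if Z = 1 then L else X"])
  show "t \<in> below M L \<xi> X \<longleftrightarrow> sat M ((\<lambda>_. \<xi>)(0 := t)) (\<lambda>Z. if Z = 1 then L else X)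
      (Conj (Mem (Var 0) 0) (Ex 3 (Ex 4 (Conj (is_pair_fm (Var 0) (Var 3) (Var 4))
        (Conj (pair_mem_fm (Var 3) (Var 2) 5 1) (Neg (Eq (Var 3) (Var 2))))))))" for t
    by (auto simp: below_iff ltL_proj0_iff)
qed (use assms in auto)

end

section \<open>Hierarchies along a well-order\<close>

lemma leL_fieldL: "leL M L x y \<Longrightarrow> fieldL M L x"
  unfolding fieldL_def by blast

lemma ltL_irrefl: "\<not> ltL M L x x"
  by (simp add: ltL_def)

lemma wo_refl: "wo M L \<Longrightarrow> fieldL M L x \<Longrightarrow> leL M L x x"
  unfolding wo_def by blast

lemma wo_antisym: "wo M L \<Longrightarrow> leL M L x y \<Longrightarrow> leL M L y x \<Longrightarrow> x = y"
  unfolding wo_def by blast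

lemma wo_trans: "wo M L \<Longrightarrow> leL M L x y \<Longrightarrow> leL M L y z \<Longrightarrow> leL M L x z"
  unfolding wo_def by blast

lemma ltL_leL_trans: "wo M L \<Longrightarrow> ltL M L x y \<Longrightarrow> leL M L y z \<Longrightarrow> ltL M L x z"
  unfolding ltL_def by (metis wo_antisym wo_trans)

lemma wo_minimal:
  assumes wo: "wo M L" and "Z \<in> sets M" and "x \<in> Z" and "fieldL M L x"
  obtains z where "z \<in> Z" and "fieldL M L z" and "\<And>w. ltL M L w z \<Longrightarrow> w \<notin> Z"
proof -
  have "\<exists>z\<in>Z. fieldL M L z \<and> (\<forall>y\<in>Z. fieldL M L y \<longrightarrow> leL M L z y)"
    using assms unfolding wo_def by blast
  then obtain z where z: "z \<in> Z" "fieldL M L z" and least: "\<And>y. y \<in> Z \<Longrightarrow> fieldL M L y \<Longrightarrow> leL M L z y"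
    by blast
  have "w \<notin> Z" if lt: "ltL M L w z" for w
  proof
    assume "w \<in> Z"
    from lt have wz: "leL M L w z" "w \<noteq> z" unfolding ltL_def by auto
    from \<open>w \<in> Z\<close> wz(1) have "leL M L z w" by (intro least leL_fieldL)
    with wz show False using wo_antisym[OF wo] by blast
  qed
  with z that show thesis by blast
qed

lemma below_cong:
  "(\<And>t. ltL M L (proj0 M t) \<xi> \<Longrightarrow> t \<in> X \<longleftrightarrow> t \<in> Y) \<Longrightarrow> below M L \<xi> X = below M L \<xi> Y"
  unfolding below_def by blast

locale wo_hierarchy = aca_model M for M :: "'a s2" +
  fixes \<phi> :: fm and xv yv :: nat and e :: "nat \<Rightarrow> 'a" and E :: "nat \<Rightarrow> 'a set" and L :: "'a set"
  assumes arith_\<phi>: "arith \<phi>" and params_in_sets: "\<And>Z. E Z \<in> sets M"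
    and L_in_sets: "L \<in> sets M" and wo: "wo M L"
begin

abbreviation leL_L (infix "\<preceq>" 50) where "x \<preceq> y \<equiv> leL M L x y"
abbreviation ltL_L (infix "\<prec>" 50) where "x \<prec> y \<equiv> ltL M L x y"
abbreviation tr where "tr \<equiv> TR M \<phi> xv yv e E L"
abbreviation tr_hat where "tr_hat \<equiv> TRhat M \<phi> xv yv e E L"
abbreviation \<Phi> where "\<Phi> a B \<equiv> sat M (e(xv := a)) (E(yv := B)) \<phi>"

lemma failures_in_sets:
  assumes "X \<in> sets M"
  shows "{\<xi>. \<xi> \<preceq> lam \<and> (\<exists>a. \<not> (pair M \<xi> a \<in> X \<longleftrightarrow> \<Phi> a (below M L \<xi> X)))} \<in> sets M"
proof -
  define xi where "xi = max (num_bound \<phi>) (Suc xv)"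
  define lamv where "lamv = Suc xi"
  define k where "k = Suc lamv"
  define XV where "XV = max (set_bound \<phi>) (Suc yv)"
  define LV where "LV = Suc XV"
  have fresh: "xv < xi" "num_bound \<phi> \<le> xi" "xi < lamv" "lamv < k" "xv \<noteq> k" "xi \<noteq> k"
    "yv < XV" "set_bound \<phi> \<le> XV" "XV < LV"
    unfolding xi_def lamv_def k_def XV_def LV_def by auto
  let ?E = "E(XV := X, LV := L, yv := below_code L X)"
  have \<phi>_below: "sat M (e(lamv := lam, xi := \<xi>, xv := a)) ?E (below_subst yv xi \<phi>)
      \<longleftrightarrow> \<Phi> a (below M L \<xi> X)" for \<xi> a
  proof -
    have "sat M (e(lamv := lam, xi := \<xi>, xv := a)) ?E (below_subst yv xi \<phi>)
        \<longleftrightarrow> sat M (e(lamv := lam, xi := \<xi>, xv := a)) (E(XV := X, LV := L, yv := below M L \<xi> X)) \<phi>"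
      using sat_below_subst[OF arith_\<phi> fresh(2), of "e(lamv := lam, xi := \<xi>, xv := a)"] fresh(1)
      by simp
    also have "\<dots> \<longleftrightarrow> \<Phi> a (below M L \<xi> X)"
      by (rule sat_cong) (use fresh in auto)
    finally show ?thesis .
  qed
  show ?thesis
  proof (rule definable_in_sets[where v = xi and e = "e(lamv := lam)" and E = ?E])
    show "?E Z \<in> sets M" for Z
      using params_in_sets assms L_in_sets below_code_in_sets by simp
    show "\<xi> \<in> {\<xi>. \<xi> \<preceq> lam \<and> (\<exists>a. \<not> (pair M \<xi> a \<in> X \<longleftrightarrow> \<Phi> a (below M L \<xi> X)))}
      \<longleftrightarrow> sat M ((e(lamv := lam))(xi := \<xi>)) ?E
        (Conj (pair_mem_fm (Var xi) (Var lamv) k LV)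
          (Ex xv (Neg (iff_fm (pair_mem_fm (Var xi) (Var xv) k XV) (below_subst yv xi \<phi>)))))" for \<xi>
      using fresh by (simp add: \<phi>_below leL_def)
  qed (simp add: arith_\<phi>)
qed

lemma extension_in_sets:
  assumes "B \<in> sets M"
  shows "{t. t \<in> B \<or> (proj0 M t = \<xi>0 \<and> \<Phi> (proj1 M t) B)} \<in> sets M"
proof -
  define tv where "tv = max (num_bound \<phi>) (Suc xv)"
  define av where "av = Suc tv"
  define zv where "zv = Suc av"
  have fresh: "xv < tv" "num_bound \<phi> \<le> tv" "tv < av" "av < zv"
    unfolding tv_def av_def zv_def by auto
  have \<phi>_cong: "sat M (e(zv := \<xi>0, tv := t, av := a, xv := b)) (E(yv := B)) \<phi> \<longleftrightarrow> \<Phi> b B" for t a b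
    by (rule sat_cong) (use fresh in auto)
  show ?thesis
  proof (rule definable_in_sets[where v = tv and e = "e(zv := \<xi>0)" and E = "E(yv := B)"])
    show "(E(yv := B)) Z \<in> sets M" for Z
      using params_in_sets assms by simp
    show "t \<in> {t. t \<in> B \<or> (proj0 M t = \<xi>0 \<and> \<Phi> (proj1 M t) B)}
      \<longleftrightarrow> sat M ((e(zv := \<xi>0))(tv := t)) (E(yv := B))
        (Disj (Mem (Var tv) yv)
          (Ex av (Ex xv (Conj (is_pair_fm (Var tv) (Var av) (Var xv)) (Conj (Eq (Var av) (Var zv)) \<phi>)))))"
      for t
      using fresh by (simp add: \<phi>_cong ex_pair_iff)
  qed (simp add: arith_\<phi>)
qed

lemma disagreement_in_sets:
  assumes "Y \<in> sets M" and "Y' \<in> sets M"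
  shows "{\<eta>. \<eta> \<preceq> lam \<and> (\<exists>a. \<not> (pair M \<eta> a \<in> Y \<longleftrightarrow> pair M \<eta> a \<in> Y'))} \<in> sets M"
proof (rule definable_in_sets[where v = 0 and e = "\<lambda>_. lam"
      and E = "\<lambda>Z. if Z = 0 then L else if Z = 1 then Y else Y'"])
  show "\<eta> \<in> {\<eta>. \<eta> \<preceq> lam \<and> (\<exists>a. \<not> (pair M \<eta> a \<in> Y \<longleftrightarrow> pair M \<eta> a \<in> Y'))}
    \<longleftrightarrow> sat M ((\<lambda>_. lam)(0 := \<eta>)) (\<lambda>Z. if Z = 0 then L else if Z = 1 then Y else Y')
      (Conj (pair_mem_fm (Var 0) (Var 1) 5 0)
        (Ex 3 (Neg (iff_fm (pair_mem_fm (Var 0) (Var 3) 5 1) (pair_mem_fm (Var 0) (Var 3) 5 2)))))"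
    for \<eta>
    by (simp add: leL_def)
qed (use assms L_in_sets in auto)

lemma TR_restrict: "tr lam Y \<Longrightarrow> \<xi> \<preceq> lam \<Longrightarrow> tr \<xi> Y"
  unfolding TR_def using wo_trans[OF wo] by blast

lemma TR_unique:
  assumes Y: "Y \<in> sets M" "Y' \<in> sets M" and T: "tr lam Y" "tr lam Y'" and "\<eta> \<preceq> lam"
  shows "pair M \<eta> a \<in> Y \<longleftrightarrow> pair M \<eta> a \<in> Y'"
proof (rule ccontr)
  let ?D = "{\<eta>. \<eta> \<preceq> lam \<and> (\<exists>a. \<not> (pair M \<eta> a \<in> Y \<longleftrightarrow> pair M \<eta> a \<in> Y'))}"
  assume "\<not> (pair M \<eta> a \<in> Y \<longleftrightarrow> pair M \<eta> a \<in> Y')"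
  with \<open>\<eta> \<preceq> lam\<close> have "\<eta> \<in> ?D" by blast
  obtain \<eta>0 where "\<eta>0 \<in> ?D" and "fieldL M L \<eta>0" and min: "\<And>w. w \<prec> \<eta>0 \<Longrightarrow> w \<notin> ?D"
    using wo_minimal[OF wo disagreement_in_sets[OF Y] \<open>\<eta> \<in> ?D\<close> leL_fieldL[OF \<open>\<eta> \<preceq> lam\<close>]] by blast
  from \<open>\<eta>0 \<in> ?D\<close> obtain a0 where \<eta>0: "\<eta>0 \<preceq> lam" "\<not> (pair M \<eta>0 a0 \<in> Y \<longleftrightarrow> pair M \<eta>0 a0 \<in> Y')" by blast
  have "below M L \<eta>0 Y = below M L \<eta>0 Y'"
  proof (rule below_cong)
    fix t assume lt: "proj0 M t \<prec> \<eta>0"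
    then have "proj0 M t \<preceq> lam" using ltL_leL_trans[OF wo lt \<eta>0(1)] by (simp add: ltL_def)
    with min[OF lt]
    have "pair M (proj0 M t) (proj1 M t) \<in> Y \<longleftrightarrow> pair M (proj0 M t) (proj1 M t) \<in> Y'" by blast
    then show "t \<in> Y \<longleftrightarrow> t \<in> Y'" by simp
  qed
  moreover have "pair M \<eta>0 a0 \<in> Y \<longleftrightarrow> \<Phi> a0 (below M L \<eta>0 Y)"
    using T(1) \<eta>0(1) unfolding TR_def by blast
  moreover have "pair M \<eta>0 a0 \<in> Y' \<longleftrightarrow> \<Phi> a0 (below M L \<eta>0 Y')"
    using T(2) \<eta>0(1) unfolding TR_def by blast
  ultimately show False using \<eta>0(2) by simp
qed

lemma below_TR_unique:
  assumes "Y \<in> sets M" and "Y' \<in> sets M" and "tr \<xi> Y" and "tr \<xi> Y'"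
  shows "below M L \<xi> Y = below M L \<xi> Y'"
proof (rule below_cong)
  fix t assume "proj0 M t \<prec> \<xi>"
  then show "t \<in> Y \<longleftrightarrow> t \<in> Y'"
    using TR_unique[OF assms, of "proj0 M t" "proj1 M t"] by (simp add: ltL_def)
qed

lemma TR_collapse:
  assumes "Y \<in> sets M" and "tr \<xi> Y"
  shows "(\<forall>Y'\<in>sets M. tr \<xi> Y' \<longrightarrow> \<Phi> a (below M L \<xi> Y')) \<longleftrightarrow> \<Phi> a (below M L \<xi> Y)"
  using assms below_TR_unique[OF assms(1) _ assms(2)] by metis

lemma TR_extend:
  assumes X: "X \<in> sets M" and "fieldL M L \<xi>0"
    and recursion_below: "\<And>\<eta> b. \<eta> \<prec> \<xi>0 \<Longrightarrow> pair M \<eta> b \<in> X \<longleftrightarrow> \<Phi> b (below M L \<eta> X)"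
  obtains Y where "Y \<in> sets M" and "tr \<xi>0 Y" and "below M L \<xi>0 Y = below M L \<xi>0 X"
proof -
  let ?B = "below M L \<xi>0 X"
  let ?Y = "{t. t \<in> ?B \<or> (proj0 M t = \<xi>0 \<and> \<Phi> (proj1 M t) ?B)}"
  have "?Y \<in> sets M" by (rule extension_in_sets) (rule below_in_sets[OF X L_in_sets])
  have below_Y: "below M L \<xi> ?Y = below M L \<xi> X" if "\<xi> \<preceq> \<xi>0" for \<xi>
  proof (rule below_cong)
    fix t assume "proj0 M t \<prec> \<xi>"
    then have "proj0 M t \<prec> \<xi>0" using ltL_leL_trans[OF wo _ that] by blast
    then show "t \<in> ?Y \<longleftrightarrow> t \<in> X" by (auto simp: below_iff ltL_irrefl)
  qed
  have "tr \<xi>0 ?Y"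
    unfolding TR_def
  proof (intro allI impI)
    fix \<xi> x assume "\<xi> \<preceq> \<xi>0"
    show "pair M \<xi> x \<in> ?Y \<longleftrightarrow> \<Phi> x (below M L \<xi> ?Y)"
    proof (cases "\<xi> = \<xi>0")
      case True
      then show ?thesis unfolding below_Y[OF \<open>\<xi> \<preceq> \<xi>0\<close>] by (simp add: below_iff ltL_irrefl)
    next
      case False
      with \<open>\<xi> \<preceq> \<xi>0\<close> have "\<xi> \<prec> \<xi>0" by (simp add: ltL_def)
      with False show ?thesis unfolding below_Y[OF \<open>\<xi> \<preceq> \<xi>0\<close>] by (simp add: below_iff recursion_below)
    qed
  qed
  moreover have "below M L \<xi>0 ?Y = below M L \<xi>0 X"
    by (rule below_Y) (rule wo_refl[OF wo \<open>fieldL M L \<xi>0\<close>])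
  ultimately show thesis using that \<open>?Y \<in> sets M\<close> by blast
qed

lemma TR_imp_TRhat:
  assumes X: "X \<in> sets M" and T: "tr lam X"
  shows "tr_hat lam X"
  unfolding TRhat_def
proof (intro allI impI)
  fix x assume "proj0 M x \<preceq> lam"
  then have "tr (proj0 M x) X" by (rule TR_restrict[OF T])
  then have "(\<forall>Y\<in>sets M. tr (proj0 M x) Y \<longrightarrow> \<Phi> (proj1 M x) (below M L (proj0 M x) Y))
      \<longleftrightarrow> \<Phi> (proj1 M x) (below M L (proj0 M x) X)"
    by (rule TR_collapse[OF X])
  also have "\<dots> \<longleftrightarrow> x \<in> X"
    using T \<open>proj0 M x \<preceq> lam\<close> unfolding TR_def by (metis pair_proj)
  finally show "x \<in> X \<longleftrightarrow> (\<forall>Y\<in>sets M. tr (proj0 M x) Y \<longrightarrow> \<Phi> (proj1 M x) (below M L (proj0 M x) Y))"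
    by blast
qed

lemma TRhat_imp_TR:
  assumes X: "X \<in> sets M" and H: "tr_hat lam X"
  shows "tr lam X"
proof (rule ccontr)
  let ?F = "{\<xi>. \<xi> \<preceq> lam \<and> (\<exists>a. \<not> (pair M \<xi> a \<in> X \<longleftrightarrow> \<Phi> a (below M L \<xi> X)))}"
  assume "\<not> tr lam X"
  then obtain \<xi> where "\<xi> \<in> ?F" unfolding TR_def by blast
  then have "fieldL M L \<xi>" by (auto intro: leL_fieldL)
  obtain \<xi>0 where "\<xi>0 \<in> ?F" and "fieldL M L \<xi>0" and min: "\<And>\<eta>. \<eta> \<prec> \<xi>0 \<Longrightarrow> \<eta> \<notin> ?F"
    using wo_minimal[OF wo failures_in_sets[OF X] \<open>\<xi> \<in> ?F\<close> \<open>fieldL M L \<xi>\<close>] by blast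
  from \<open>\<xi>0 \<in> ?F\<close> obtain a0 where \<xi>0_lam: "\<xi>0 \<preceq> lam"
    and fails: "\<not> (pair M \<xi>0 a0 \<in> X \<longleftrightarrow> \<Phi> a0 (below M L \<xi>0 X))" by blast
  have "pair M \<eta> b \<in> X \<longleftrightarrow> \<Phi> b (below M L \<eta> X)" if "\<eta> \<prec> \<xi>0" for \<eta> b
    using min[OF that] ltL_leL_trans[OF wo that \<xi>0_lam] by (auto simp: ltL_def)
  then obtain Y where Y: "Y \<in> sets M" "tr \<xi>0 Y" "below M L \<xi>0 Y = below M L \<xi>0 X"
    using TR_extend[OF X \<open>fieldL M L \<xi>0\<close>] by blast
  have "pair M \<xi>0 a0 \<in> X \<longleftrightarrow> (\<forall>Y'\<in>sets M. tr \<xi>0 Y' \<longrightarrow> \<Phi> a0 (below M L \<xi>0 Y'))"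
    using H \<xi>0_lam unfolding TRhat_def by (metis proj0_pair proj1_pair)
  also have "\<dots> \<longleftrightarrow> \<Phi> a0 (below M L \<xi>0 Y)" by (rule TR_collapse[OF Y(1,2)])
  finally show False using fails Y(3) by simp
qed

end

theorem mainTheorem14:
  fixes M :: "'a s2" and \<phi> :: fm and xv yv :: nat
    and e :: "nat \<Rightarrow> 'a" and E :: "nat \<Rightarrow> 'a set" and L X :: "'a set"
  assumes "ACA0_model M"
    and "arith \<phi>"
    and "\<forall>Z. E Z \<in> sets M"
    and "L \<in> sets M" and "X \<in> sets M"
  shows "wo M L \<longrightarrow>
           (\<forall>lam. fieldL M L lam \<longrightarrow>
              (TRhat M \<phi> xv yv e E L lam X \<longleftrightarrow> TR M \<phi> xv yv e E L lam X))"
proof (intro impI allI)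
  \<comment> \<open>the equivalence holds for every \<open>lam\<close>, in the field of \<open>L\<close> or not\<close>
  fix lam
  assume "wo M L"
  interpret wo_hierarchy M \<phi> xv yv e E L
    using assms \<open>wo M L\<close> by unfold_locales auto
  show "TRhat M \<phi> xv yv e E L lam X \<longleftrightarrow> TR M \<phi> xv yv e E L lam X"
    using TR_imp_TRhat TRhat_imp_TR assms(5) by blast
qed

end
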